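(* Let $d$ be an odd prime. For each vector $\vec c=(c_0,c_1,\dots,c_{d-1})$ of complex numbers of modulus one with $c_0=1$, let $U(\vec c)$ be the one-qudit unitary $U(\vec c)=F\,\mathrm{diag}(c_0,\dots,c_{d-1})$, i.e. $U(\vec c)|j\rangle=c_j\frac{1}{\sqrt d}\sum_{m\in\mathbb{Z}_d}\omega^{jm}|m\rangle$. Then every unitary $V\in U(d)$ can be written as a finite product of gates of the form $U(\vec c)$.
   Context: $\omega=e^{2\pi i/d}$; qudits have computational basis $\{|j\rangle : j\in\mathbb{Z}_d\}$; $F|j\rangle=\frac1{\sqrt d}\sum_{m\in\mathbb{Z}_d}\omega^{jm}|m\rangle$ is the quantum Fourier transform on one qudit. *)

theory Defs
  imports "Jordan_Normal_Form.Schur_Decomposition"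
begin

definition omega :: "nat \<Rightarrow> complex" where
  "omega d = cis (2 * pi / real d)"

definition gateU :: "nat \<Rightarrow> (nat \<Rightarrow> complex) \<Rightarrow> complex mat" where
  "gateU d c = mat d d (\<lambda>(m, j). c j * omega d ^ (j * m) / complex_of_real (sqrt (real d)))"

definition admissible :: "nat \<Rightarrow> (nat \<Rightarrow> complex) \<Rightarrow> bool" where
  "admissible d c \<longleftrightarrow> c 0 = 1 \<and> (\<forall>j<d. cmod (c j) = 1)"

definition unitary_mat :: "nat \<Rightarrow> complex mat \<Rightarrow> bool" where
  "unitary_mat d V \<longleftrightarrow> V \<in> carrier_mat d d \<and> V * mat_adjoint V = 1\<^sub>m d"

end

theory Submission
  imports Defs
begin

(* For a unit vector v and |a| = 1 let R(v, a) = I + (a - 1) v v^* be the phase matrix about v.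
   Every unitary is a product of d such matrices (reduce its columns one by one from the right), so
   it suffices to show that every R(v, a) is a product of gates U(c).
   The gates give the Fourier matrix F = U(1, ..., 1), its adjoint F^3 and all diagonal unitaries
   with c_0 = 1. As U R(v, a) U^* = R(U v, a), the unit vectors v whose phase matrices are all gate
   products are closed under these unitaries and under the phase matrices of each other; this lets
   one pass from x to any unit vector l x + c w with |l| = 1. The set contains e_j for j > 0 and the
   column F e_1, hence every vector with all entries of modulus 1/sqrt d. In the real plane spanned
   by (e_0 + e_j)/sqrt 2 and the normalised sum of the other basis vectors, reflections in such
   flat vectors rotate by a fixed angle, which leads to (e_0 + e_j)/sqrt 2; from there one reaches
   every unit vector of span {e_0, e_j}, and by induction on the support every unit vector. *)

lemma unimodular_iff_mult_cnj: "cmod a = 1 \<longleftrightarrow> a * cnj a = 1"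
proof -
  have "a * cnj a = complex_of_real ((cmod a)\<^sup>2)" by (rule complex_norm_square[symmetric])
  then have "a * cnj a = 1 \<longleftrightarrow> (cmod a)\<^sup>2 = 1" by (metis of_real_eq_1_iff)
  then show ?thesis using abs_square_eq_1[of "cmod a"] by simp
qed

lemma unimodular_mult_cnj: "cmod a = 1 \<Longrightarrow> a * cnj a = 1"
  by (simp add: unimodular_iff_mult_cnj)

lemma cnj_mult_self: "cnj z * z = complex_of_real ((cmod z)\<^sup>2)"
  by (simp only: complex_norm_square mult.commute)

lemma of_real_sqrt_mult_self:
  "0 \<le> x \<Longrightarrow> complex_of_real (sqrt x) * complex_of_real (sqrt x) = complex_of_real x"
  by (simp flip: of_real_mult)

lemma divide_sqrt_times_divide_sqrt:
  "x / complex_of_real (sqrt (real d)) * (y / complex_of_real (sqrt (real d))) = x * y / of_nat d"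
  using of_real_sqrt_mult_self[of "real d"] by (simp add: times_divide_times_eq)

lemma sum_cis_powers:
  assumes "d > 0"
  shows "(\<Sum>k<d. cis (2 * pi * of_int a / real d) ^ k) = (if int d dvd a then of_nat d else 0)"
proof (cases "int d dvd a")
  case True
  then obtain q where "a = int d * q" by (elim dvdE)
  then have "cis (2 * pi * of_int a / real d) = cis (2 * pi * of_int q)"
    using assms by (simp add: field_simps)
  then show ?thesis using True by simp
next
  case False
  let ?z = "cis (2 * pi * of_int a / real d)"
  have "?z \<noteq> 1"
  proof
    assume "?z = 1"
    then have "cos (2 * pi * of_int a / real d) = 1" by (simp add: complex_eq_iff)
    then obtain n :: int where "2 * pi * of_int a / real d = of_int n * 2 * pi"
      by (subst (asm) cos_one_2pi_int) blast
    then have "of_int a = (of_int (n * int d) :: real)" using assms by (simp add: field_simps)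
    then show False using False by (simp only: of_int_eq_iff) simp
  qed
  moreover have "?z ^ d = 1"
    using assms by (simp add: DeMoivre)
  ultimately show ?thesis using geometric_sum[of ?z d] False by simp
qed

lemma omega_power: "omega d ^ n = cis (2 * pi * real n / real d)"
  by (simp add: omega_def DeMoivre field_simps)

lemma norm_omega_power [simp]: "cmod (omega d ^ n) = 1"
  by (simp add: omega_power)

lemma omega_power_mod:
  assumes "d > 0"
  shows "omega d ^ (n mod d) = omega d ^ n"
proof -
  have "omega d ^ d = 1" using assms by (simp add: omega_power)
  then show ?thesis by (metis div_mult_mod_eq power_add power_mult power_one mult.commute mult_1)
qed

lemma cnj_omega_power:
  assumes "i \<le> d" "0 < d"
  shows "cnj (omega d ^ i) = omega d ^ (d - i)"
proof -
  have "omega d ^ (d - i) * omega d ^ i = omega d ^ d"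
    using assms by (simp flip: power_add)
  also have "\<dots> = 1"
    using assms by (simp add: omega_power)
  finally have "omega d ^ (d - i) * omega d ^ i = 1" .
  moreover have "cnj (omega d ^ i) * omega d ^ i = 1"
    using unimodular_mult_cnj[OF norm_omega_power] by (simp add: mult.commute)
  moreover have "omega d ^ i \<noteq> 0" by (simp add: omega_power)
  ultimately show ?thesis by (metis mult_cancel_right)
qed

lemma sum_omega_orthogonality:
  assumes "m < d" "n < d"
  shows "(\<Sum>k<d. omega d ^ (k * m) * cnj (omega d ^ (k * n))) = (if m = n then of_nat d else 0)"
proof -
  let ?z = "cis (2 * pi * of_int (int m - int n) / real d)"
  have "omega d ^ (k * m) * cnj (omega d ^ (k * n)) = ?z ^ k" for k
    by (simp add: omega_power cis_cnj cis_mult DeMoivre algebra_simps diff_divide_distrib)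
  then have "(\<Sum>k<d. omega d ^ (k * m) * cnj (omega d ^ (k * n))) = (\<Sum>k<d. ?z ^ k)" by simp
  also have "\<dots> = (if int d dvd (int m - int n) then of_nat d else 0)"
    using assms by (intro sum_cis_powers) simp
  also have "int d dvd (int m - int n) \<longleftrightarrow> m = n"
  proof
    assume "int d dvd (int m - int n)"
    then have "int d dvd \<bar>int m - int n\<bar>" by simp
    moreover have "\<bar>int m - int n\<bar> < int d" using assms by linarith
    ultimately show "m = n" using zdvd_imp_le by fastforce
  qed simp
  finally show ?thesis .
qed

lemma dvd_add_iff_eq_neg_mod:
  fixes d :: nat
  assumes "i < d" "j < d"
  shows "d dvd i + j \<longleftrightarrow> j = (d - i) mod d"
  using assms by (cases "i = 0"; cases "i + j < d") (auto simp: dvd_eq_mod_eq_0 le_mod_geq)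

lemma cnj_of_bool [simp]: "cnj (of_bool P) = of_bool P"
  by (cases P) simp_all

lemma index_mult_square:
  assumes "A \<in> carrier_mat d d" "B \<in> carrier_mat d d" "i < d" "j < d"
  shows "(A * B) $$ (i, j) = (\<Sum>k<d. A $$ (i, k) * B $$ (k, j))"
  using assms by (simp add: scalar_prod_def lessThan_atLeast0)

lemma mat_mult_mat:
  "mat d d f * mat d d g = mat d d (\<lambda>(i, j). \<Sum>k<d. f (i, k) * g (k, j))"
  by (rule eq_matI) (auto simp: scalar_prod_def lessThan_atLeast0 intro!: sum.cong)

lemma dim_mat_adjoint [simp]:
  "dim_row (mat_adjoint A) = dim_col A" "dim_col (mat_adjoint A) = dim_row A"
  by (simp_all add: mat_adjoint_def)

lemma mat_adjoint_carrier [simp]: "V \<in> carrier_mat d d \<Longrightarrow> mat_adjoint V \<in> carrier_mat d d"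
  by (simp add: mat_adjoint_def mat_of_rows_def)

lemma mat_adjoint_index:
  assumes "V \<in> carrier_mat d d" "i < d" "j < d"
  shows "mat_adjoint V $$ (i, j) = cnj (V $$ (j, i))"
  using assms by (simp add: mat_adjoint_def mat_of_rows_def)

lemma index_mult_mat_adjoint:
  assumes "A \<in> carrier_mat d d" "B \<in> carrier_mat d d" "i < d" "j < d"
  shows "(A * mat_adjoint B) $$ (i, j) = (\<Sum>k<d. A $$ (i, k) * cnj (B $$ (j, k)))"
proof -
  have "(A * mat_adjoint B) $$ (i, j) = (\<Sum>k<d. A $$ (i, k) * mat_adjoint B $$ (k, j))"
    using assms by (intro index_mult_square) auto
  also have "\<dots> = (\<Sum>k<d. A $$ (i, k) * cnj (B $$ (j, k)))"
    using assms by (auto simp: mat_adjoint_index intro!: sum.cong)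
  finally show ?thesis .
qed

lemma mat_adjoint_mat: "mat_adjoint (mat d d f) = mat d d (\<lambda>(i, j). cnj (f (j, i)))"
  by (rule eq_matI) (auto simp: mat_adjoint_def mat_of_rows_def)

lemma mat_adjoint_mat_diag: "mat_adjoint (mat_diag d c) = mat_diag d (\<lambda>i. cnj (c i))"
  unfolding mat_diag_def mat_adjoint_mat by (rule eq_matI) auto

lemma mat_diag_unitary:
  assumes "\<And>i. i < d \<Longrightarrow> cmod (c i) = 1"
  shows "mat_diag d c * mat_adjoint (mat_diag d c) = 1\<^sub>m d"
proof -
  have "mat_diag d c * mat_adjoint (mat_diag d c) = mat_diag d (\<lambda>i. c i * cnj (c i))"
    by (simp add: mat_adjoint_mat_diag)
  also have "\<dots> = 1\<^sub>m d"
    using assms by (intro eq_matI) (auto simp: mat_diag_def unimodular_mult_cnj)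
  finally show ?thesis .
qed

definition cinner :: "nat \<Rightarrow> (nat \<Rightarrow> complex) \<Rightarrow> (nat \<Rightarrow> complex) \<Rightarrow> complex" where
  "cinner d v x = (\<Sum>k<d. cnj (v k) * x k)"

definition unit_vector :: "nat \<Rightarrow> (nat \<Rightarrow> complex) \<Rightarrow> bool" where
  "unit_vector d v \<longleftrightarrow> cinner d v v = 1"

definition apply_mat :: "nat \<Rightarrow> complex mat \<Rightarrow> (nat \<Rightarrow> complex) \<Rightarrow> nat \<Rightarrow> complex" where
  "apply_mat d U x = (\<lambda>m. \<Sum>k<d. U $$ (m, k) * x k)"

definition basis_fun :: "nat \<Rightarrow> nat \<Rightarrow> complex" where
  "basis_fun k = (\<lambda>m. of_bool (m = k))"

lemma cinner_add_right: "cinner d v (\<lambda>m. x m + c * w m) = cinner d v x + c * cinner d v w"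
  by (simp add: cinner_def ring_distribs sum.distrib sum_distrib_left mult_ac)

lemma cinner_add_left: "cinner d (\<lambda>m. x m + c * w m) y = cinner d x y + cnj c * cinner d w y"
  by (simp add: cinner_def ring_distribs sum.distrib sum_distrib_left mult_ac)

lemma cinner_commute: "cinner d x w = cnj (cinner d w x)"
  by (simp add: cinner_def mult.commute)

lemma cinner_scale: "cinner d (\<lambda>m. k * v m) (\<lambda>m. l * x m) = cnj k * l * cinner d v x"
  by (simp add: cinner_def sum_distrib_left mult_ac)

lemma cinner_cong:
  "(\<And>m. m < d \<Longrightarrow> v m = v' m) \<Longrightarrow> (\<And>m. m < d \<Longrightarrow> x m = x' m) \<Longrightarrow> cinner d v x = cinner d v' x'"
  by (simp add: cinner_def)

lemma unit_vector_basis_fun: "k < d \<Longrightarrow> unit_vector d (basis_fun k)"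
  by (simp add: unit_vector_def cinner_def basis_fun_def)

section \<open>Phase matrices\<close>

definition phase_mat :: "nat \<Rightarrow> (nat \<Rightarrow> complex) \<Rightarrow> complex \<Rightarrow> complex mat" where
  "phase_mat d v a = mat d d (\<lambda>(m, n). of_bool (m = n) + (a - 1) * v m * cnj (v n))"

definition phase_vec :: "nat \<Rightarrow> (nat \<Rightarrow> complex) \<Rightarrow> complex \<Rightarrow> (nat \<Rightarrow> complex) \<Rightarrow> nat \<Rightarrow> complex" where
  "phase_vec d v a x = (\<lambda>m. x m + (a - 1) * cinner d v x * v m)"

lemma phase_mat_carrier [simp]: "phase_mat d v a \<in> carrier_mat d d"
  by (simp add: phase_mat_def)

lemma phase_mat_cong: "(\<And>m. m < d \<Longrightarrow> v m = w m) \<Longrightarrow> phase_mat d v a = phase_mat d w a"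
  unfolding phase_mat_def by (rule eq_matI) auto

lemma phase_mat_one [simp]: "phase_mat d v 1 = 1\<^sub>m d"
  by (rule eq_matI) (auto simp: phase_mat_def)

lemma mat_adjoint_phase_mat: "mat_adjoint (phase_mat d v a) = phase_mat d v (cnj a)"
  unfolding phase_mat_def mat_adjoint_mat by (rule eq_matI) auto

lemma apply_mat_phase_mat:
  "m < d \<Longrightarrow> apply_mat d (phase_mat d v a) x m = phase_vec d v a x m"
  by (simp add: apply_mat_def phase_mat_def phase_vec_def cinner_def ring_distribs sum.distrib
      sum_distrib_left mult_ac)

lemma sum_rank_one_products:
  fixes d :: nat
  assumes "m < d" "n < d"
  shows "(\<Sum>k<d. (of_bool (m = k) + x m * y k) * (of_bool (k = n) + z k * w n))
       = of_bool (m = n) + z m * w n + x m * y n + x m * w n * (\<Sum>k<d. y k * z k :: complex)"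
proof -
  have "(\<Sum>k<d. (of_bool (m = k) + x m * y k) * (of_bool (k = n) + z k * w n))
      = (\<Sum>k<d. of_bool (m = k) * of_bool (k = n)) + (\<Sum>k<d. of_bool (m = k) * (z k * w n))
        + (\<Sum>k<d. x m * y k * of_bool (k = n)) + (\<Sum>k<d. x m * y k * (z k * w n))"
    by (simp add: distrib_left distrib_right sum.distrib)
  also have "\<dots> = of_bool (m = n) + z m * w n + x m * y n + (\<Sum>k<d. x m * y k * (z k * w n))"
    using assms by simp
  also have "(\<Sum>k<d. x m * y k * (z k * w n)) = x m * w n * (\<Sum>k<d. y k * z k)"
    by (simp add: sum_distrib_left mult_ac)
  finally show ?thesis .
qed

lemma phase_mat_mult:
  assumes "unit_vector d v"
  shows "phase_mat d v a * phase_mat d v b = phase_mat d v (a * b)"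
proof (rule eq_matI)
  fix m n assume "m < dim_row (phase_mat d v (a * b))" "n < dim_col (phase_mat d v (a * b))"
  then have mn: "m < d" "n < d" by (auto simp: phase_mat_def)
  have "(phase_mat d v a * phase_mat d v b) $$ (m, n) = (\<Sum>k<d.
      (of_bool (m = k) + (a - 1) * v m * cnj (v k)) * (of_bool (k = n) + (b - 1) * v k * cnj (v n)))"
    using mn by (simp add: mat_mult_mat phase_mat_def)
  also have "\<dots> = of_bool (m = n) + (b - 1) * v m * cnj (v n) + (a - 1) * v m * cnj (v n)
      + (a - 1) * v m * cnj (v n) * (\<Sum>k<d. cnj (v k) * ((b - 1) * v k))"
    using sum_rank_one_products[OF mn, of "\<lambda>m. (a - 1) * v m" "\<lambda>k. cnj (v k)"
        "\<lambda>k. (b - 1) * v k" "\<lambda>n. cnj (v n)"] by (simp add: mult.assoc)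
  also have "(\<Sum>k<d. cnj (v k) * ((b - 1) * v k)) = (b - 1) * cinner d v v"
    by (simp add: cinner_def sum_distrib_left mult_ac)
  also have "of_bool (m = n) + (b - 1) * v m * cnj (v n) + (a - 1) * v m * cnj (v n)
      + (a - 1) * v m * cnj (v n) * ((b - 1) * cinner d v v) = phase_mat d v (a * b) $$ (m, n)"
    using assms mn by (simp add: unit_vector_def phase_mat_def algebra_simps)
  finally show "(phase_mat d v a * phase_mat d v b) $$ (m, n) = phase_mat d v (a * b) $$ (m, n)" .
qed (auto simp: phase_mat_def)

lemma phase_mat_unitary:
  assumes "unit_vector d v" "cmod a = 1"
  shows "phase_mat d v a * mat_adjoint (phase_mat d v a) = 1\<^sub>m d"
  using assms by (simp add: mat_adjoint_phase_mat phase_mat_mult unimodular_mult_cnj)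

lemma conj_phase_mat:
  assumes U: "U \<in> carrier_mat d d" and unitary: "U * mat_adjoint U = 1\<^sub>m d"
  shows "U * phase_mat d x b * mat_adjoint U = phase_mat d (apply_mat d U x) b"
proof (rule eq_matI)
  fix m n assume "m < dim_row (phase_mat d (apply_mat d U x) b)"
    "n < dim_col (phase_mat d (apply_mat d U x) b)"
  then have mn: "m < d" "n < d" by (auto simp: phase_mat_def)
  let ?y = "apply_mat d U x"
  have U_phase: "(U * phase_mat d x b) $$ (m, l) = U $$ (m, l) + (b - 1) * ?y m * cnj (x l)"
    if "l < d" for l
  proof -
    have "(U * phase_mat d x b) $$ (m, l)
        = (\<Sum>k<d. U $$ (m, k) * (of_bool (k = l) + (b - 1) * x k * cnj (x l)))"
      using index_mult_square[OF U phase_mat_carrier mn(1) that] mn that by (simp add: phase_mat_def)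
    also have "\<dots> = U $$ (m, l) + (b - 1) * ?y m * cnj (x l)"
      using that by (simp add: apply_mat_def distrib_left sum.distrib sum_distrib_left mult_ac)
    finally show ?thesis .
  qed
  have "(\<Sum>l<d. U $$ (m, l) * cnj (U $$ (n, l))) = (U * mat_adjoint U) $$ (m, n)"
    using index_mult_mat_adjoint[OF U U mn] by simp
  also have "\<dots> = of_bool (m = n)" using unitary mn by simp
  finally have U_orth: "(\<Sum>l<d. U $$ (m, l) * cnj (U $$ (n, l))) = of_bool (m = n)" .
  have "(U * phase_mat d x b * mat_adjoint U) $$ (m, n)
      = (\<Sum>l<d. (U * phase_mat d x b) $$ (m, l) * cnj (U $$ (n, l)))"
    using U mn by (intro index_mult_mat_adjoint) auto
  also have "\<dots> = (\<Sum>l<d. U $$ (m, l) * cnj (U $$ (n, l)))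
      + (b - 1) * ?y m * (\<Sum>l<d. cnj (x l) * cnj (U $$ (n, l)))"
    by (simp add: U_phase distrib_right sum.distrib sum_distrib_left mult.assoc)
  also have "\<dots> = of_bool (m = n) + (b - 1) * ?y m * cnj (?y n)"
    by (simp add: U_orth apply_mat_def cnj_sum mult.commute)
  also have "\<dots> = phase_mat d ?y b $$ (m, n)"
    using mn by (simp add: phase_mat_def)
  finally show "(U * phase_mat d x b * mat_adjoint U) $$ (m, n) = phase_mat d ?y b $$ (m, n)" .
qed (use U in \<open>auto simp: phase_mat_def mat_adjoint_def\<close>)

lemma cinner_phase_vec_right: "unit_vector d w \<Longrightarrow> cinner d w (phase_vec d w a x) = a * cinner d w x"
  unfolding phase_vec_def cinner_add_right by (simp add: unit_vector_def algebra_simps)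

lemma phase_vec_phase_vec:
  assumes "unit_vector d w"
  shows "phase_vec d w a (phase_vec d w b x) = phase_vec d w (a * b) x"
proof (rule ext)
  fix m
  have "phase_vec d w a (phase_vec d w b x) m
      = phase_vec d w b x m + (a - 1) * (b * cinner d w x) * w m"
    using cinner_phase_vec_right[OF assms] by (simp add: phase_vec_def[of d w a])
  then show "phase_vec d w a (phase_vec d w b x) m = phase_vec d w (a * b) x m"
    by (simp add: phase_vec_def algebra_simps)
qed

lemma phase_vec_one [simp]: "phase_vec d w 1 x = x"
  by (simp add: phase_vec_def)

lemma phase_vec_cong:
  "(\<And>m. m < d \<Longrightarrow> x m = y m) \<Longrightarrow> l < d \<Longrightarrow> phase_vec d w a x l = phase_vec d w a y l"
  by (simp add: phase_vec_def cinner_def)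

lemma cinner_phase_vec:
  assumes "unit_vector d w" "cmod a = 1"
  shows "cinner d (phase_vec d w a x) (phase_vec d w a y) = cinner d x y"
proof -
  have "cinner d (phase_vec d w a x) (phase_vec d w a y)
      = cinner d x y + (cnj a * a - 1) * cnj (cinner d w x) * cinner d w y"
    using assms(1) unfolding phase_vec_def cinner_add_left cinner_add_right
    by (simp add: cinner_commute[of d x w] unit_vector_def algebra_simps)
  then show ?thesis
    using unimodular_mult_cnj[OF assms(2)] by (simp add: mult.commute)
qed

(* a = 1 + c / <w, x>; the unit length of x + c w is exactly the condition |a| = 1 *)
lemma exists_phase_vec_eq:
  assumes w: "unit_vector d w" and x: "unit_vector d x" and y: "unit_vector d (\<lambda>m. x m + c * w m)"
  shows "\<exists>a. cmod a = 1 \<and> phase_vec d w a x = (\<lambda>m. x m + c * w m)"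
proof (cases "c = 0")
  case True
  then show ?thesis by (intro exI[of _ 1]) simp
next
  case False
  define s where "s = cinner d w x"
  have "cinner d x x + c * cinner d x w + cnj c * (cinner d w x + c * cinner d w w) = 1"
    using y by (simp add: unit_vector_def cinner_add_left cinner_add_right)
  then have eq: "c * cnj s + cnj c * s + cnj c * c = 0"
    using w x by (simp add: unit_vector_def s_def cinner_commute[of d x w] algebra_simps)
  have "s \<noteq> 0"
    using eq False by auto
  define a where "a = 1 + c / s"
  have "a * cnj a = ((s + c) * cnj (s + c)) / (s * cnj s)"
    using \<open>s \<noteq> 0\<close> by (simp add: a_def field_simps)
  also have "(s + c) * cnj (s + c) = s * cnj s + (c * cnj s + cnj c * s + cnj c * c)"
    by (simp add: algebra_simps)
  finally have "cmod a = 1"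
    using eq \<open>s \<noteq> 0\<close> by (simp add: unimodular_iff_mult_cnj)
  moreover have "phase_vec d w a x = (\<lambda>m. x m + c * w m)"
    using \<open>s \<noteq> 0\<close> by (simp add: phase_vec_def a_def s_def[symmetric])
  ultimately show ?thesis by blast
qed

section \<open>Products of gates\<close>

definition gate_product :: "nat \<Rightarrow> complex mat \<Rightarrow> bool" where
  "gate_product d M \<longleftrightarrow>
     (\<exists>cs. (\<forall>c\<in>set cs. admissible d c) \<and> M = foldr (\<lambda>c M. gateU d c * M) cs (1\<^sub>m d))"

lemma gateU_carrier [simp]: "gateU d c \<in> carrier_mat d d"
  by (simp add: gateU_def)

lemma foldr_gateU_carrier: "foldr (\<lambda>c M. gateU d c * M) cs (1\<^sub>m d) \<in> carrier_mat d d"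
  by (induction cs) (simp_all add: mult_carrier_mat[OF gateU_carrier])

lemma foldr_gateU_mult:
  "M \<in> carrier_mat d d \<Longrightarrow>
   foldr (\<lambda>c M. gateU d c * M) cs M = foldr (\<lambda>c M. gateU d c * M) cs (1\<^sub>m d) * M"
  by (induction cs) (auto simp: assoc_mult_mat[OF gateU_carrier foldr_gateU_carrier])

lemma gate_product_carrier: "gate_product d M \<Longrightarrow> M \<in> carrier_mat d d"
  unfolding gate_product_def using foldr_gateU_carrier by blast

lemma gate_product_one: "gate_product d (1\<^sub>m d)"
  unfolding gate_product_def by (rule exI[of _ "[]"]) simp

lemma gate_product_gateU: "admissible d c \<Longrightarrow> gate_product d (gateU d c)"
  unfolding gate_product_def by (rule exI[of _ "[c]"]) (simp add: right_mult_one_mat[OF gateU_carrier])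

lemma gate_product_mult:
  assumes "gate_product d A" "gate_product d B"
  shows "gate_product d (A * B)"
proof -
  obtain as bs where "\<forall>c\<in>set as. admissible d c" "A = foldr (\<lambda>c M. gateU d c * M) as (1\<^sub>m d)"
    "\<forall>c\<in>set bs. admissible d c" "B = foldr (\<lambda>c M. gateU d c * M) bs (1\<^sub>m d)"
    using assms unfolding gate_product_def by blast
  then show ?thesis
    unfolding gate_product_def
    by (intro exI[of _ "as @ bs"]) (auto simp: foldr_gateU_mult[OF foldr_gateU_carrier])
qed

definition fourier_mat :: "nat \<Rightarrow> complex mat" where
  "fourier_mat d = gateU d (\<lambda>_. 1)"

lemma fourier_mat_carrier [simp]: "fourier_mat d \<in> carrier_mat d d"
  and dim_fourier_mat [simp]: "dim_row (fourier_mat d) = d" "dim_col (fourier_mat d) = d"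
  by (simp_all add: fourier_mat_def gateU_def)

lemma fourier_mat_index:
  "i < d \<Longrightarrow> j < d \<Longrightarrow> fourier_mat d $$ (i, j) = omega d ^ (i * j) / sqrt (real d)"
  by (simp add: fourier_mat_def gateU_def mult.commute)

lemma gateU_eq_fourier_mat_diag: "gateU d c = fourier_mat d * mat_diag d c"
  by (rule eq_matI) (auto simp: mat_diag_mult_right[OF fourier_mat_carrier] fourier_mat_index gateU_def
      mult.commute)

lemma fourier_mat_unitary:
  shows "fourier_mat d * mat_adjoint (fourier_mat d) = 1\<^sub>m d"
    and "mat_adjoint (fourier_mat d) * fourier_mat d = 1\<^sub>m d"
proof -
  have "(\<Sum>k<d. fourier_mat d $$ (i, k) * cnj (fourier_mat d $$ (j, k))) = of_bool (i = j)"
    if "i < d" "j < d" for i j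
  proof -
    have "(\<Sum>k<d. fourier_mat d $$ (i, k) * cnj (fourier_mat d $$ (j, k)))
        = (\<Sum>k<d. omega d ^ (k * i) * cnj (omega d ^ (k * j)) / of_nat d)"
      using that by (intro sum.cong refl) (simp only: fourier_mat_index complex_cnj_divide
          complex_cnj_complex_of_real divide_sqrt_times_divide_sqrt mult.commute[of i] mult.commute[of j]
          lessThan_iff)
    then show ?thesis using sum_omega_orthogonality[OF that] that by (simp flip: sum_divide_distrib)
  qed
  note orth = this
  show F_adj: "fourier_mat d * mat_adjoint (fourier_mat d) = 1\<^sub>m d"
  proof (rule eq_matI)
    fix i j assume "i < dim_row (1\<^sub>m d)" "j < dim_col (1\<^sub>m d)"
    then show "(fourier_mat d * mat_adjoint (fourier_mat d)) $$ (i, j) = 1\<^sub>m d $$ (i, j)"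
      using index_mult_mat_adjoint[OF fourier_mat_carrier fourier_mat_carrier, of i d j] orth
      by simp
  qed simp_all
  then show "mat_adjoint (fourier_mat d) * fourier_mat d = 1\<^sub>m d"
    by (rule mat_mult_left_right_inverse[OF fourier_mat_carrier mat_adjoint_carrier[OF fourier_mat_carrier]])
qed

lemma fourier_mat_square:
  "fourier_mat d * fourier_mat d = mat d d (\<lambda>(i, j). of_bool (j = (d - i) mod d))"
proof (rule eq_matI)
  fix i j assume "i < dim_row (mat d d (\<lambda>(i, j). of_bool (j = (d - i) mod d)) :: complex mat)"
    "j < dim_col (mat d d (\<lambda>(i, j). of_bool (j = (d - i) mod d)) :: complex mat)"
  then have ij: "i < d" "j < d" by auto
  let ?z = "cis (2 * pi * of_int (int i + int j) / real d)"
  have "omega d ^ (i * k) * omega d ^ (k * j) = ?z ^ k" for k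
    by (simp add: omega_power cis_mult DeMoivre algebra_simps add_divide_distrib)
  then have "(fourier_mat d * fourier_mat d) $$ (i, j) = (\<Sum>k<d. ?z ^ k / of_nat d)"
    using ij by (simp only: index_mult_square[OF fourier_mat_carrier fourier_mat_carrier ij])
      (intro sum.cong refl, simp only: fourier_mat_index divide_sqrt_times_divide_sqrt lessThan_iff)
  also have "\<dots> = of_bool (int d dvd int i + int j)"
    using ij sum_cis_powers[of d "int i + int j"] by (simp flip: sum_divide_distrib)
  also have "\<dots> = of_bool (j = (d - i) mod d)"
    using ij by (simp add: dvd_add_iff_eq_neg_mod flip: of_nat_add)
  finally show "(fourier_mat d * fourier_mat d) $$ (i, j)
      = mat d d (\<lambda>(i, j). of_bool (j = (d - i) mod d)) $$ (i, j)"
    using ij by simp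
qed simp_all

lemma fourier_mat_cube: "fourier_mat d * fourier_mat d * fourier_mat d = mat_adjoint (fourier_mat d)"
proof (rule eq_matI)
  fix i j assume "i < dim_row (mat_adjoint (fourier_mat d))" "j < dim_col (mat_adjoint (fourier_mat d))"
  then have ij: "i < d" "j < d" by auto
  have "(fourier_mat d * fourier_mat d * fourier_mat d) $$ (i, j)
      = (\<Sum>k<d. (fourier_mat d * fourier_mat d) $$ (i, k) * fourier_mat d $$ (k, j))"
    by (rule index_mult_square[OF mult_carrier_mat[OF fourier_mat_carrier fourier_mat_carrier]
          fourier_mat_carrier ij])
  also have "\<dots> = (\<Sum>k<d. of_bool (k = (d - i) mod d) * fourier_mat d $$ (k, j))"
    using ij by (intro sum.cong refl) (simp add: fourier_mat_square)
  also have "\<dots> = fourier_mat d $$ ((d - i) mod d, j)"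
    using ij by simp
  also have "\<dots> = omega d ^ (((d - i) mod d) * j) / sqrt (real d)"
    using ij by (simp add: fourier_mat_index)
  also have "omega d ^ (((d - i) mod d) * j) = cnj (omega d ^ (i * j))"
  proof -
    have "omega d ^ ((d - i) mod d) = cnj (omega d ^ i)"
      using ij by (metis cnj_omega_power omega_power_mod less_imp_le zero_less_iff_neq_zero
          not_less_zero)
    then show ?thesis by (metis power_mult complex_cnj_power)
  qed
  also have "cnj (omega d ^ (i * j)) / sqrt (real d) = mat_adjoint (fourier_mat d) $$ (i, j)"
    using ij by (simp add: mat_adjoint_index[OF fourier_mat_carrier] fourier_mat_index mult.commute)
  finally show "(fourier_mat d * fourier_mat d * fourier_mat d) $$ (i, j)
      = mat_adjoint (fourier_mat d) $$ (i, j)" .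
qed simp_all

lemma gate_product_fourier_mat: "gate_product d (fourier_mat d)"
  unfolding fourier_mat_def by (rule gate_product_gateU) (simp add: admissible_def)

lemma gate_product_mat_adjoint_fourier_mat: "gate_product d (mat_adjoint (fourier_mat d))"
  by (metis fourier_mat_cube gate_product_fourier_mat gate_product_mult)

lemma gate_product_mat_diag:
  assumes "admissible d c"
  shows "gate_product d (mat_diag d c)"
proof -
  have "mat_diag d c = (mat_adjoint (fourier_mat d) * fourier_mat d) * mat_diag d c"
    by (simp add: fourier_mat_unitary left_mult_one_mat[OF mat_diag_dim])
  also have "\<dots> = mat_adjoint (fourier_mat d) * gateU d c"
    by (simp add: gateU_eq_fourier_mat_diag assoc_mult_mat[of _ d d _ d _ d])
  finally show ?thesis
    using assms by (simp add: gate_product_mult gate_product_mat_adjoint_fourier_mat gate_product_gateU)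
qed

section \<open>Vectors with generated phase matrices\<close>

definition phases_generated :: "nat \<Rightarrow> (nat \<Rightarrow> complex) \<Rightarrow> bool" where
  "phases_generated d v \<longleftrightarrow> (\<forall>a. cmod a = 1 \<longrightarrow> gate_product d (phase_mat d v a))"

lemma phases_generated_cong:
  "(\<And>m. m < d \<Longrightarrow> v m = w m) \<Longrightarrow> phases_generated d v \<longleftrightarrow> phases_generated d w"
  unfolding phases_generated_def by (metis phase_mat_cong)

lemma phases_generated_scale:
  assumes "cmod l = 1" "phases_generated d v"
  shows "phases_generated d (\<lambda>m. l * v m)"
proof -
  have "(a - 1) * (l * v m) * cnj (l * v n) = (a - 1) * (l * cnj l) * (v m * cnj (v n))" for a m n
    by (simp add: mult_ac)
  then have "(a - 1) * (l * v m) * cnj (l * v n) = (a - 1) * v m * cnj (v n)" for a m n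
    using unimodular_mult_cnj[OF assms(1)] by (simp add: mult.assoc)
  then have "phase_mat d (\<lambda>m. l * v m) a = phase_mat d v a" for a
    unfolding phase_mat_def by presburger
  then show ?thesis
    using assms(2) by (simp add: phases_generated_def)
qed

lemma phases_generated_apply_mat:
  assumes "gate_product d U" "gate_product d (mat_adjoint U)" "U * mat_adjoint U = 1\<^sub>m d"
    and "phases_generated d x"
  shows "phases_generated d (apply_mat d U x)"
  unfolding phases_generated_def
proof (intro allI impI)
  fix b :: complex assume "cmod b = 1"
  then have "gate_product d (U * phase_mat d x b * mat_adjoint U)"
    using assms by (simp add: phases_generated_def gate_product_mult)
  then show "gate_product d (phase_mat d (apply_mat d U x) b)"
    using assms(1,3) by (simp add: conj_phase_mat gate_product_carrier)
qed

lemma phases_generated_phase_vec: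
  assumes "phases_generated d w" "unit_vector d w" "cmod a = 1" "phases_generated d x"
  shows "phases_generated d (phase_vec d w a x)"
proof -
  have "phases_generated d (apply_mat d (phase_mat d w a) x)"
  proof (rule phases_generated_apply_mat)
    show "gate_product d (mat_adjoint (phase_mat d w a))"
      using assms(1,3) by (simp add: phases_generated_def mat_adjoint_phase_mat)
  qed (use assms in \<open>simp_all add: phases_generated_def phase_mat_unitary\<close>)
  then show ?thesis
    using phases_generated_cong[of d "apply_mat d (phase_mat d w a) x" "phase_vec d w a x"]
    by (simp add: apply_mat_phase_mat)
qed

lemma phases_generated_mult_diag:
  assumes "admissible d c" "phases_generated d x"
  shows "phases_generated d (\<lambda>m. c m * x m)"
proof -
  have "phases_generated d (apply_mat d (mat_diag d c) x)"
  proof (rule phases_generated_apply_mat)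
    show "gate_product d (mat_adjoint (mat_diag d c))"
      using assms(1) by (simp add: mat_adjoint_mat_diag gate_product_mat_diag admissible_def)
  qed (use assms in \<open>simp_all add: gate_product_mat_diag mat_diag_unitary admissible_def\<close>)
  moreover have "apply_mat d (mat_diag d c) x m = c m * x m" if "m < d" for m
  proof -
    have "apply_mat d (mat_diag d c) x m = (\<Sum>k<d. (if m = k then c k else 0) * x k)"
      using that by (simp add: apply_mat_def mat_diag_def)
    also have "\<dots> = (\<Sum>k<d. if m = k then c k * x k else 0)"
      by (rule sum.cong) auto
    finally show ?thesis using that by simp
  qed
  ultimately show ?thesis
    using phases_generated_cong[of d "apply_mat d (mat_diag d c) x" "\<lambda>m. c m * x m"] by simp
qed

lemma phases_generated_combination:
  assumes "phases_generated d x" "unit_vector d x" "phases_generated d w" "unit_vector d w"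
    and "cmod l = 1" "unit_vector d (\<lambda>m. l * x m + c * w m)"
  shows "phases_generated d (\<lambda>m. l * x m + c * w m)"
proof -
  have "l \<noteq> 0" using assms(5) by auto
  have "(\<lambda>m. x m + c / l * w m) = (\<lambda>m. inverse l * (l * x m + c * w m))"
    using \<open>l \<noteq> 0\<close> by (simp add: fun_eq_iff field_simps)
  then have "cinner d (\<lambda>m. x m + c / l * w m) (\<lambda>m. x m + c / l * w m)
      = cnj (inverse l) * inverse l * cinner d (\<lambda>m. l * x m + c * w m) (\<lambda>m. l * x m + c * w m)"
    by (simp only: cinner_scale)
  also have "\<dots> = inverse (l * cnj l)"
    using assms(6) by (simp add: unit_vector_def mult.commute)
  finally have "unit_vector d (\<lambda>m. x m + c / l * w m)"
    using assms(5) by (simp add: unit_vector_def unimodular_mult_cnj)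
  then obtain a where "cmod a = 1" "phase_vec d w a x = (\<lambda>m. x m + c / l * w m)"
    using exists_phase_vec_eq assms(2,4) by blast
  then have "phases_generated d (\<lambda>m. x m + c / l * w m)"
    using phases_generated_phase_vec assms(1,3,4) by metis
  then have "phases_generated d (\<lambda>m. l * (x m + c / l * w m))"
    using phases_generated_scale assms(5) by blast
  then show ?thesis
    using \<open>l \<noteq> 0\<close> by (simp add: distrib_left)
qed

lemma phases_generated_basis_fun:
  assumes "0 < k" "k < d"
  shows "phases_generated d (basis_fun k)"
  unfolding phases_generated_def
proof (intro allI impI)
  fix a :: complex assume "cmod a = 1"
  have "phase_mat d (basis_fun k) a = mat_diag d (\<lambda>m. if m = k then a else 1)"
    by (rule eq_matI) (auto simp: phase_mat_def mat_diag_def basis_fun_def)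
  moreover have "admissible d (\<lambda>m. if m = k then a else 1)"
    using \<open>cmod a = 1\<close> assms by (simp add: admissible_def)
  ultimately show "gate_product d (phase_mat d (basis_fun k) a)"
    by (simp add: gate_product_mat_diag)
qed

lemma phases_generated_fourier_column:
  assumes "1 < d"
  shows "phases_generated d (\<lambda>m. omega d ^ m / sqrt (real d))"
proof -
  have "phases_generated d (apply_mat d (fourier_mat d) (basis_fun 1))"
    using assms by (intro phases_generated_apply_mat phases_generated_basis_fun)
      (simp_all add: gate_product_fourier_mat gate_product_mat_adjoint_fourier_mat
        fourier_mat_unitary)
  moreover have "apply_mat d (fourier_mat d) (basis_fun 1) m = omega d ^ m / sqrt (real d)"
    if "m < d" for m
    using assms that by (simp add: apply_mat_def basis_fun_def fourier_mat_index)
  ultimately show ?thesis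
    using phases_generated_cong[of d "apply_mat d (fourier_mat d) (basis_fun 1)"] by simp
qed

lemma phases_generated_flat:
  assumes "1 < d" and flat: "\<And>m. m < d \<Longrightarrow> cmod (v m) = 1 / sqrt (real d)"
  shows "phases_generated d v"
proof -
  define e where "e m = v m / (v 0 * omega d ^ m)" for m
  have "v 0 \<noteq> 0"
    using flat[of 0] assms(1) by auto
  have "admissible d e"
    using \<open>v 0 \<noteq> 0\<close> flat assms(1) by (simp add: admissible_def e_def norm_divide norm_mult)
  then have "phases_generated d (\<lambda>m. e m * (omega d ^ m / sqrt (real d)))"
    using assms(1) by (intro phases_generated_mult_diag phases_generated_fourier_column)
  moreover have "cmod (v 0 * sqrt (real d)) = 1"
    using flat[of 0] assms(1) by (simp add: norm_mult)
  ultimately have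
    "phases_generated d (\<lambda>m. (v 0 * sqrt (real d)) * (e m * (omega d ^ m / sqrt (real d))))"
    by (intro phases_generated_scale)
  moreover have "(v 0 * sqrt (real d)) * (e m * (omega d ^ m / sqrt (real d))) = v m" for m
    using \<open>v 0 \<noteq> 0\<close> assms(1) by (simp add: e_def omega_power)
  ultimately show ?thesis by simp
qed

section \<open>Reaching (e_0 + e_j)/sqrt 2\<close>

lemma cos_sin_reflect_rotate:
  shows "cos A - 2 * cos (A + B) * cos B = cos (A - (pi - 2 * B))"
    and "- (sin A + 2 * cos (A + B) * sin B) = sin (A - (pi - 2 * B))"
proof -
  have e: "A - (pi - 2 * B) = (A + 2 * B) - pi" by simp
  show "cos A - 2 * cos (A + B) * cos B = cos (A - (pi - 2 * B))"
    unfolding e cos_minus_pi cos_add cos_double_cos sin_double by (simp add: algebra_simps power2_eq_square)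
  show "- (sin A + 2 * cos (A + B) * sin B) = sin (A - (pi - 2 * B))"
    unfolding e sin_minus_pi sin_add cos_add cos_double_sin sin_double by (simp add: algebra_simps power2_eq_square)
qed

lemma exists_unimodular_dist_one:
  fixes c t :: real
  assumes "0 \<le> c" "c \<le> 1" "0 < t" "t \<le> 1" "1 \<le> c + t"
  shows "\<exists>z. cmod z = 1 \<and> cmod (complex_of_real c - z * complex_of_real t) = 1"
proof (cases "c = 0")
  case True
  then show ?thesis using assms by (intro exI[of _ 1]) simp
next
  case False
  with assms(1) have "0 < c" by simp
  define g where "g = (c\<^sup>2 + t\<^sup>2 - 1) / (2 * c * t)"
  have "2 * c * t > 0" using \<open>0 < c\<close> assms by simp
  have "-1 \<le> g" "g \<le> 1"
  proof -
    have "(c - t - 1) * (c - t + 1) \<le> 0" using assms by (intro mult_nonpos_nonneg) auto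
    then show "g \<le> 1" using \<open>2 * c * t > 0\<close>
      by (simp add: g_def pos_divide_le_eq algebra_simps power2_eq_square)
    have "1 \<le> (c + t)\<^sup>2" using assms by (simp add: one_le_power)
    then show "-1 \<le> g" using \<open>2 * c * t > 0\<close>
      by (simp add: g_def pos_le_divide_eq algebra_simps power2_eq_square)
  qed
  define \<theta> where "\<theta> = arccos g"
  have "(cmod (c - cis \<theta> * t))\<^sup>2 = (c - t * cos \<theta>)\<^sup>2 + (t * sin \<theta>)\<^sup>2"
    by (simp add: cmod_power2 mult.commute)
  also have "\<dots> = c\<^sup>2 - 2 * c * t * cos \<theta> + ((t * cos \<theta>)\<^sup>2 + (t * sin \<theta>)\<^sup>2)"
    by (simp add: power2_eq_square algebra_simps)
  also have "(t * cos \<theta>)\<^sup>2 + (t * sin \<theta>)\<^sup>2 = t\<^sup>2"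
  proof -
    have "t\<^sup>2 * ((cos \<theta>)\<^sup>2 + (sin \<theta>)\<^sup>2) = t\<^sup>2" by simp
    then show ?thesis by (simp only: power_mult_distrib distrib_left)
  qed
  also have "cos \<theta> = g"
    using \<open>-1 \<le> g\<close> \<open>g \<le> 1\<close> by (simp add: \<theta>_def)
  also have "c\<^sup>2 - 2 * c * t * g + t\<^sup>2 = 1"
    using \<open>0 < c\<close> assms(3) by (simp add: g_def)
  finally have "cmod (c - cis \<theta> * t) = 1"
    by (simp add: abs_square_eq_1)
  then show ?thesis by (intro exI[of _ "cis \<theta>"]) simp
qed

lemma sum_if_pair_else:
  fixes d j :: nat
  assumes "0 < j" "j < d"
  shows "(\<Sum>k<d. if k = 0 \<or> k = j then p else q) = 2 * p + (of_nat d - 2) * (q :: complex)"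
proof -
  have "{..<d} \<inter> {k. k = 0 \<or> k = j} = {0, j}" "{..<d} \<inter> - {k. k = 0 \<or> k = j} = {..<d} - {0, j}"
    using assms by auto
  moreover have "card ({..<d} - {0, j}) = d - 2"
    using assms by (subst card_Diff_subset) auto
  ultimately show ?thesis
    using assms by (simp add: sum.If_cases of_nat_diff)
qed

locale fourier_plane =
  fixes d j :: nat
  assumes three_le_d: "3 \<le> d" and j_pos: "0 < j" and j_less: "j < d"
begin

(* the vector a (e_0 + e_j) / sqrt 2 + b u, where u is the normalised indicator of the other
   d - 2 coordinates *)
definition plane_vec :: "complex \<Rightarrow> complex \<Rightarrow> nat \<Rightarrow> complex" where
  "plane_vec a b = (\<lambda>m. if m = 0 \<or> m = j then a / sqrt 2 else b / sqrt (real d - 2))"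

lemma cinner_plane_vec: "cinner d (plane_vec a b) (plane_vec a' b') = cnj a * a' + cnj b * b'"
proof -
  have "cinner d (plane_vec a b) (plane_vec a' b')
      = (\<Sum>k<d. if k = 0 \<or> k = j then cnj a * a' / 2 else cnj b * b' / (of_nat d - 2))"
    unfolding cinner_def plane_vec_def
    using of_real_sqrt_mult_self[of 2] of_real_sqrt_mult_self[of "real d - 2"] three_le_d
    by (intro sum.cong refl) (auto simp: field_simps)
  also have "\<dots> = 2 * (cnj a * a' / 2) + (of_nat d - 2) * (cnj b * b' / (of_nat d - 2))"
    by (rule sum_if_pair_else[OF j_pos j_less])
  also have "\<dots> = cnj a * a' + cnj b * b'"
  proof -
    have "(of_nat d :: complex) \<noteq> of_nat 2"
      using three_le_d by (simp only: of_nat_eq_iff)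
    then show ?thesis by simp
  qed
  finally show ?thesis .
qed

lemma unit_vector_plane_vec: "cnj a * a + cnj b * b = 1 \<Longrightarrow> unit_vector d (plane_vec a b)"
  by (simp add: unit_vector_def cinner_plane_vec)

lemma plane_vec_combination:
  "(\<lambda>m. l * plane_vec a b m + k * plane_vec a' b' m) = plane_vec (l * a + k * a') (l * b + k * b')"
  by (simp add: plane_vec_def fun_eq_iff add_divide_distrib)

lemma phases_generated_plane_vec_neg:
  "phases_generated d (plane_vec a b) \<Longrightarrow> phases_generated d (plane_vec a (- b))"
  using phases_generated_mult_diag[of d "\<lambda>m. if m = 0 \<or> m = j then 1 else -1" "plane_vec a b"]
  by (simp add: admissible_def plane_vec_def if_distrib cong: if_cong)

definition arc_vec :: "real \<Rightarrow> nat \<Rightarrow> complex" where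
  "arc_vec A = plane_vec (complex_of_real (cos A)) (complex_of_real (sin A))"

(* the flat vectors of the plane are plane_vec (z cos beta) (sin beta) with |z| = 1 *)
definition beta :: real where
  "beta = arccos (sqrt (2 / real d))"

lemma cos_beta: "cos beta = sqrt (2 / real d)"
  and sin_beta: "sin beta = sqrt ((real d - 2) / real d)"
  and beta_pos: "0 < beta" and beta_less: "beta < pi / 2"
proof -
  have lt1: "sqrt (2 / real d) < 1"
    using three_le_d by simp
  have pos: "0 < sqrt (2 / real d)"
    using three_le_d by simp
  show "cos beta = sqrt (2 / real d)"
    unfolding beta_def using lt1 pos by (intro cos_arccos) linarith+
  have "sin beta = sqrt (1 - (sqrt (2 / real d))\<^sup>2)"
    unfolding beta_def using lt1 pos by (intro sin_arccos) linarith+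
  also have "1 - (sqrt (2 / real d))\<^sup>2 = (real d - 2) / real d"
    using three_le_d by (simp add: field_simps)
  finally show "sin beta = sqrt ((real d - 2) / real d)" .
  show "0 < beta"
    using arccos_lt_bounded[of "sqrt (2 / real d)"] lt1 pos by (simp add: beta_def)
  have "arccos (sqrt (2 / real d)) < arccos 0"
    using lt1 pos by (intro arccos_less_arccos) auto
  then show "beta < pi / 2"
    by (simp add: beta_def)
qed

lemma phases_generated_flat_plane_vec:
  assumes "cmod z = 1"
  shows "phases_generated d (plane_vec (z * cos beta) (sin beta))"
proof (rule phases_generated_flat)
  show "1 < d" using three_le_d by simp
  have "sqrt (2 / real d) / sqrt 2 = 1 / sqrt (real d)"
    "sqrt ((real d - 2) / real d) / sqrt (real d - 2) = 1 / sqrt (real d)"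
    using three_le_d by (simp_all add: real_sqrt_divide)
  then show "cmod (plane_vec (z * cos beta) (sin beta) m) = 1 / sqrt (real d)" for m
    using assms three_le_d
    by (simp add: plane_vec_def cos_beta sin_beta norm_mult norm_divide)
qed

lemma unit_vector_flat_plane_vec:
  assumes "cmod z = 1"
  shows "unit_vector d (plane_vec (z * cos beta) (sin beta))"
proof (rule unit_vector_plane_vec)
  let ?c = "complex_of_real (cos beta)" and ?s = "complex_of_real (sin beta)"
  have "cnj (z * ?c) * (z * ?c) + cnj ?s * ?s = (z * cnj z) * (?c * ?c) + ?s * ?s"
    by (simp add: mult_ac)
  also have "\<dots> = ?c * ?c + ?s * ?s"
    using unimodular_mult_cnj[OF assms] by simp
  also have "\<dots> = 1"
    by (metis of_real_add of_real_mult of_real_1 sin_cos_squared_add3 add.commute)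
  finally show "cnj (z * ?c) * (z * ?c) + cnj ?s * ?s = 1" .
qed

(* reflect in the flat vector at angle pi - beta, then flip the sign of the u-component:
   a rotation by -(pi - 2 beta) *)
lemma phases_generated_arc_vec_rotate:
  assumes "phases_generated d (arc_vec A)"
  shows "phases_generated d (arc_vec (A - (pi - 2 * beta)))"
proof -
  define w where "w = plane_vec (- cos beta) (sin beta)"
  have w: "phases_generated d w" "unit_vector d w"
    using phases_generated_flat_plane_vec[of "-1"] unit_vector_flat_plane_vec[of "-1"]
    by (simp_all add: w_def)
  have "cinner d w (arc_vec A) = - cos (A + beta)"
    by (simp add: w_def arc_vec_def cinner_plane_vec cos_add)
  then have "phase_vec d w (-1) (arc_vec A) = (\<lambda>m. 1 * arc_vec A m + (2 * cos (A + beta)) * w m)"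
    by (simp add: phase_vec_def fun_eq_iff)
  also have "\<dots> = plane_vec (cos A - 2 * cos (A + beta) * cos beta) (sin A + 2 * cos (A + beta) * sin beta)"
    unfolding w_def arc_vec_def plane_vec_combination by simp
  finally have reflected: "phase_vec d w (-1) (arc_vec A)
      = plane_vec (cos A - 2 * cos (A + beta) * cos beta) (sin A + 2 * cos (A + beta) * sin beta)" .
  have "phases_generated d (phase_vec d w (-1) (arc_vec A))"
    by (rule phases_generated_phase_vec[OF w _ assms]) simp
  then have "phases_generated d
      (plane_vec (cos A - 2 * cos (A + beta) * cos beta) (sin A + 2 * cos (A + beta) * sin beta))"
    unfolding reflected .
  then have "phases_generated d
      (plane_vec (cos A - 2 * cos (A + beta) * cos beta) (- (sin A + 2 * cos (A + beta) * sin beta)))"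
    by (metis phases_generated_plane_vec_neg of_real_minus)
  then show ?thesis
    unfolding arc_vec_def cos_sin_reflect_rotate[symmetric] by simp
qed

lemma phases_generated_arc_vec_walk: "phases_generated d (arc_vec (beta - real n * (pi - 2 * beta)))"
proof (induction n)
  case 0
  show ?case
    using phases_generated_flat_plane_vec[of 1] by (simp add: arc_vec_def)
next
  case (Suc n)
  then show ?case
    using phases_generated_arc_vec_rotate[OF Suc.IH] by (simp add: algebra_simps)
qed

lemma sin_beta_le_sin_add_beta:
  assumes "0 \<le> A" "A \<le> pi - 2 * beta"
  shows "sin beta \<le> sin (A + beta)"
proof (cases "A + beta \<le> pi / 2")
  case True
  then show ?thesis using beta_pos assms by (intro sin_monotone_2pi_le) auto
next
  case False
  have "sin beta \<le> sin (pi - (A + beta))"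
    using beta_pos beta_less False assms by (intro sin_monotone_2pi_le) auto
  then show ?thesis by simp
qed

lemma unit_vector_arc_vec: "unit_vector d (arc_vec A)"
  unfolding arc_vec_def
  by (rule unit_vector_plane_vec)
    (metis complex_cnj_complex_of_real of_real_add of_real_mult of_real_1 sin_cos_squared_add3 add.commute)

lemma exists_last_step_phase:
  assumes "0 < A" "A \<le> pi - 2 * beta" "A \<le> beta"
  shows "\<exists>z. cmod z = 1 \<and>
    cmod (complex_of_real (cos A) - z * complex_of_real (sin A * cos beta / sin beta)) = 1"
proof (rule exists_unimodular_dist_one)
  have "0 < sin beta" "0 < cos beta" "cos beta < 1"
    using beta_pos beta_less three_le_d by (auto intro!: sin_gt_zero cos_gt_zero simp: cos_beta)
  have "0 < sin A"
    using assms(1,3) beta_less by (auto intro!: sin_gt_zero)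
  then show "0 < sin A * cos beta / sin beta"
    using \<open>0 < sin beta\<close> \<open>0 < cos beta\<close> by simp
  show "0 \<le> cos A" "cos A \<le> 1"
    using assms(1,3) beta_less by (auto intro!: cos_ge_zero)
  have "sin A \<le> sin beta"
    using assms(1,3) beta_less by (intro sin_monotone_2pi_le) auto
  then have "sin A * cos beta / sin beta \<le> cos beta"
    using \<open>0 < sin beta\<close> \<open>0 < cos beta\<close> by (simp add: divide_le_eq mult_right_mono)
  then show "sin A * cos beta / sin beta \<le> 1"
    using \<open>cos beta < 1\<close> by simp
  have "cos A + sin A * cos beta / sin beta = sin (A + beta) / sin beta"
    using \<open>0 < sin beta\<close> by (simp add: sin_add field_simps)
  then show "1 \<le> cos A + sin A * cos beta / sin beta"
    using sin_beta_le_sin_add_beta[of A] assms(1,2) \<open>0 < sin beta\<close> by simp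
qed

(* if |cos A - z t| = 1 for t = sin A cos beta / sin beta, then plane_vec 1 0 is a combination
   l x + k w with |l| = 1 of x = arc_vec A and the flat vector w with phase z *)
lemma phases_generated_arc_vec_last_step:
  assumes "phases_generated d (arc_vec A)" "0 < A" "A \<le> pi - 2 * beta" "A \<le> beta"
  shows "phases_generated d (plane_vec 1 0)"
proof -
  define t where "t = sin A * cos beta / sin beta"
  obtain z where z: "cmod z = 1" "cmod (complex_of_real (cos A) - z * complex_of_real t) = 1"
    using exists_last_step_phase[OF assms(2-4)] by (auto simp: t_def)
  define l where "l = inverse (complex_of_real (cos A) - z * complex_of_real t)"
  define k where "k = - l * complex_of_real (sin A / sin beta)"
  have "cmod l = 1"
    using z(2) by (simp add: l_def norm_inverse)
  have "0 < sin beta"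
    using beta_pos beta_less by (auto intro!: sin_gt_zero)
  have "l * cos A + k * (z * cos beta) = l * (complex_of_real (cos A) - z * complex_of_real t)"
    using \<open>0 < sin beta\<close> by (simp add: k_def t_def field_simps)
  also have "\<dots> = 1"
    unfolding l_def by (rule left_inverse) (use z(2) in auto)
  finally have "l * cos A + k * (z * cos beta) = 1" .
  moreover have "l * sin A + k * sin beta = 0"
    using \<open>0 < sin beta\<close> by (simp add: k_def)
  ultimately have "(\<lambda>m. l * arc_vec A m + k * plane_vec (z * cos beta) (sin beta) m) = plane_vec 1 0"
    by (simp add: arc_vec_def plane_vec_combination)
  moreover have "phases_generated d (\<lambda>m. l * arc_vec A m + k * plane_vec (z * cos beta) (sin beta) m)"
  proof (rule phases_generated_combination)
    show "unit_vector d (\<lambda>m. l * arc_vec A m + k * plane_vec (z * cos beta) (sin beta) m)"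
      unfolding \<open>(\<lambda>m. l * arc_vec A m + k * plane_vec (z * cos beta) (sin beta) m) = plane_vec 1 0\<close>
      by (simp add: unit_vector_plane_vec)
  qed (use assms(1) z(1) \<open>cmod l = 1\<close> in \<open>simp_all add: unit_vector_arc_vec
      phases_generated_flat_plane_vec unit_vector_flat_plane_vec\<close>)
  ultimately show ?thesis by simp
qed

lemma phases_generated_plane_vec_one_zero: "phases_generated d (plane_vec 1 0)"
proof -
  define \<delta> where "\<delta> = pi - 2 * beta"
  have "0 < \<delta>" using beta_less by (simp add: \<delta>_def)
  define n where "n = nat \<lfloor>beta / \<delta>\<rfloor>"
  define A where "A = beta - real n * \<delta>"
  have "real n \<le> beta / \<delta>" "beta / \<delta> < real n + 1"
    using beta_pos \<open>0 < \<delta>\<close> by (simp_all add: n_def)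
  then have "0 \<le> A" "A < \<delta>" "A \<le> beta"
    using \<open>0 < \<delta>\<close> by (simp_all add: A_def field_simps)
  moreover have "phases_generated d (arc_vec A)"
    unfolding A_def \<delta>_def by (rule phases_generated_arc_vec_walk)
  ultimately show ?thesis
    using phases_generated_arc_vec_last_step[of A]
    by (cases "A = 0") (auto simp: arc_vec_def \<delta>_def)
qed

end

section \<open>All unit vectors\<close>

definition pair_vec :: "nat \<Rightarrow> complex \<Rightarrow> complex \<Rightarrow> nat \<Rightarrow> complex" where
  "pair_vec j s t = (\<lambda>m. if m = 0 then s else if m = j then t else 0)"

lemma sum_supported_on_pair:
  fixes j d :: nat
  assumes "0 < j" "j < d"
  shows "(\<Sum>k<d. if k = 0 then a else if k = j then b else 0) = a + (b :: complex)"
proof -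
  have "(\<Sum>k<d. if k = 0 then a else if k = j then b else 0)
      = (\<Sum>k<d. (if k = 0 then a else 0) + (if k = j then b else 0))"
    using assms by (intro sum.cong) auto
  then show ?thesis
    using assms by (simp add: sum.distrib)
qed

lemma cinner_pair_vec:
  assumes "0 < j" "j < d"
  shows "cinner d (pair_vec j s t) (pair_vec j s' t') = cnj s * s' + cnj t * t'"
proof -
  have "cinner d (pair_vec j s t) (pair_vec j s' t')
      = (\<Sum>k<d. if k = 0 then cnj s * s' else if k = j then cnj t * t' else 0)"
    unfolding cinner_def pair_vec_def by (intro sum.cong) auto
  then show ?thesis
    using sum_supported_on_pair[OF assms] by simp
qed

lemma unit_vector_pair_vec_iff:
  assumes "0 < j" "j < d"
  shows "unit_vector d (pair_vec j s t) \<longleftrightarrow> (cmod s)\<^sup>2 + (cmod t)\<^sup>2 = 1"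
proof -
  have "cinner d (pair_vec j s t) (pair_vec j s t) = complex_of_real ((cmod s)\<^sup>2 + (cmod t)\<^sup>2)"
    using assms by (simp only: cinner_pair_vec cnj_mult_self of_real_add)
  then show ?thesis
    by (metis unit_vector_def of_real_eq_1_iff)
qed

lemma pair_vec_combination:
  "(\<lambda>m. l * pair_vec j s t m + c * pair_vec j s' t' m) = pair_vec j (l * s + c * s') (l * t + c * t')"
  by (simp add: pair_vec_def fun_eq_iff)

lemma phases_generated_pair_vec_rephase:
  assumes "0 < j" "cmod p = 1" "phases_generated d (pair_vec j s t)"
  shows "phases_generated d (pair_vec j s (p * t))"
proof -
  have "admissible d (\<lambda>m. if m = j then p else 1)"
    using assms(1,2) by (simp add: admissible_def)
  moreover have "(\<lambda>m. (if m = j then p else 1) * pair_vec j s t m) = pair_vec j s (p * t)"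
    using assms(1) by (simp add: pair_vec_def fun_eq_iff)
  ultimately show ?thesis
    using phases_generated_mult_diag assms(3) by metis
qed

lemma phases_generated_pair_vec_basis:
  assumes "0 < j" "j < d" "cmod t = 1"
  shows "phases_generated d (pair_vec j 0 t)"
proof -
  have "pair_vec j 0 t = (\<lambda>m. t * basis_fun j m)"
    using assms(1) by (simp add: pair_vec_def basis_fun_def fun_eq_iff)
  then show ?thesis
    using phases_generated_scale[OF assms(3) phases_generated_basis_fun[OF assms(1,2)]] by simp
qed

lemma phases_generated_pair_vec_balanced:
  assumes "3 \<le> d" "0 < j" "j < d"
  shows "phases_generated d (pair_vec j (1 / sqrt 2) (1 / sqrt 2))"
proof -
  interpret fourier_plane d j
    using assms by unfold_locales
  have "plane_vec 1 0 = pair_vec j (1 / sqrt 2) (1 / sqrt 2)"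
    by (simp add: plane_vec_def pair_vec_def fun_eq_iff)
  then show ?thesis
    using phases_generated_plane_vec_one_zero by simp
qed

lemma sum_squares_eq_one_bounds:
  fixes a b :: real
  assumes "0 \<le> a" "0 \<le> b" "a\<^sup>2 + b\<^sup>2 = 1"
  shows "a \<le> 1" "b \<le> 1" "1 \<le> a + b"
proof -
  have "a\<^sup>2 \<le> 1\<^sup>2" "b\<^sup>2 \<le> 1\<^sup>2"
    using assms(3) zero_le_power2[of a] zero_le_power2[of b] by (simp_all only: power_one)
  then show "a \<le> 1" "b \<le> 1"
    by (metis power2_le_imp_le zero_le_one)+
  have "1\<^sup>2 \<le> (a + b)\<^sup>2"
    using assms unfolding power2_sum by simp
  then show "1 \<le> a + b"
    using power2_le_imp_le[of 1 "a + b"] assms(1,2) by simp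
qed

lemma phases_generated_pair_vec_unimodular:
  assumes "3 \<le> d" "0 < j" "j < d" "cmod \<sigma> = 1" "cmod \<tau> = 1"
  shows "phases_generated d (pair_vec j (\<sigma> / sqrt 2) (\<tau> / sqrt 2))"
proof -
  have "phases_generated d (pair_vec j (1 / sqrt 2) (\<tau> / \<sigma> * (1 / sqrt 2)))"
    using assms by (intro phases_generated_pair_vec_rephase phases_generated_pair_vec_balanced)
      (simp_all add: norm_divide)
  then have "phases_generated d (\<lambda>m. \<sigma> * pair_vec j (1 / sqrt 2) (\<tau> / \<sigma> * (1 / sqrt 2)) m)"
    by (rule phases_generated_scale[OF assms(4)])
  moreover have "(\<lambda>m. \<sigma> * pair_vec j (1 / sqrt 2) (\<tau> / \<sigma> * (1 / sqrt 2)) m)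
      = pair_vec j (\<sigma> / sqrt 2) (\<tau> / sqrt 2)"
    using assms(4) by (auto simp: pair_vec_def fun_eq_iff)
  ultimately show ?thesis by simp
qed

(* s e_0 + t e_j = l e_j + sqrt 2 |s| (s / |s| e_0 + p z e_j) / sqrt 2 with t = p |t| and |l| = 1,
   which is possible by choosing the phase z with | |t| - z |s| | = 1 *)
lemma phases_generated_pair_vec:
  assumes "3 \<le> d" "0 < j" "j < d" "unit_vector d (pair_vec j s t)"
  shows "phases_generated d (pair_vec j s t)"
proof (cases "s = 0")
  case True
  then show ?thesis
    using assms(2-4) by (simp add: unit_vector_pair_vec_iff abs_square_eq_1 phases_generated_pair_vec_basis)
next
  case False
  have norms: "(cmod t)\<^sup>2 + (cmod s)\<^sup>2 = 1"
    using assms(2-4) by (simp add: unit_vector_pair_vec_iff add.commute)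
  obtain z where z: "cmod z = 1" "cmod (complex_of_real (cmod t) - z * complex_of_real (cmod s)) = 1"
    using exists_unimodular_dist_one[of "cmod t" "cmod s"] False sum_squares_eq_one_bounds[OF _ _ norms]
    by auto
  define p where "p = (if t = 0 then 1 else t / cmod t)"
  have p: "cmod p = 1" "t = p * cmod t"
    by (auto simp: p_def norm_divide)
  define \<sigma> where "\<sigma> = s / cmod s"
  have \<sigma>: "cmod \<sigma> = 1" "s = \<sigma> * cmod s"
    using False by (auto simp: \<sigma>_def norm_divide)
  define l where "l = p * (cmod t - z * cmod s)"
  have "cmod l = 1"
    using p z by (simp add: l_def norm_mult)
  define w where "w = pair_vec j (\<sigma> / sqrt 2) (p * z / sqrt 2)"
  have "phases_generated d w"
    using assms(1-3) \<sigma>(1) p(1) z(1) by (simp add: w_def phases_generated_pair_vec_unimodular norm_mult)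
  have "unit_vector d w"
    using assms(2,3) \<sigma>(1) p(1) z(1) by (simp add: w_def unit_vector_pair_vec_iff norm_divide norm_mult
        power_divide)
  have combination: "pair_vec j s t = (\<lambda>m. l * pair_vec j 0 1 m + (sqrt 2 * cmod s) * w m)"
    unfolding w_def pair_vec_combination using p \<sigma>(2)
    by (simp add: l_def algebra_simps)
  have "phases_generated d (\<lambda>m. l * pair_vec j 0 1 m + (sqrt 2 * cmod s) * w m)"
  proof (rule phases_generated_combination)
    show "phases_generated d (pair_vec j 0 1)"
      using phases_generated_pair_vec_basis[OF assms(2,3), of 1] by simp
    show "unit_vector d (pair_vec j 0 1)"
      using assms(2,3) by (simp add: unit_vector_pair_vec_iff)
    show "unit_vector d (\<lambda>m. l * pair_vec j 0 1 m + (sqrt 2 * cmod s) * w m)"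
      using assms(4) unfolding combination .
  qed fact+
  then show ?thesis
    unfolding combination .
qed

lemma unit_vector_merge_into_zero:
  assumes "0 < j" "j < d" "unit_vector d b"
  shows "unit_vector d (\<lambda>m. if m = 0 then complex_of_real (sqrt ((cmod (b 0))\<^sup>2 + (cmod (b j))\<^sup>2))
    else if m = j then 0 else b m)" (is "unit_vector d ?b'")
proof -
  let ?r = "sqrt ((cmod (b 0))\<^sup>2 + (cmod (b j))\<^sup>2)"
  have "cinner d ?b' ?b' - cinner d b b = (\<Sum>l<d. if l = 0 then cnj ?r * ?r - cnj (b 0) * b 0
      else if l = j then - (cnj (b j) * b j) else 0)"
    unfolding cinner_def sum_subtractf[symmetric] using assms(1) by (intro sum.cong) auto
  also have "\<dots> = cnj ?r * ?r - (cnj (b 0) * b 0 + cnj (b j) * b j)"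
    by (simp add: sum_supported_on_pair[OF assms(1,2)] algebra_simps)
  also have "cnj ?r * ?r = cnj (b 0) * b 0 + cnj (b j) * b j"
    by (simp only: cnj_mult_self norm_of_real power2_abs real_sqrt_pow2 add_nonneg_nonneg
        zero_le_power2 of_real_add)
  finally show ?thesis
    using assms(3) by (simp add: unit_vector_def)
qed

(* b differs from the merged vector only in the coordinates 0 and j, so it is the merged vector
   plus a multiple of a unit vector of span {e_0, e_j} *)
lemma phases_generated_if_merged_into_zero:
  assumes "3 \<le> d" "0 < j" "j < d" "unit_vector d b"
    and "phases_generated d (\<lambda>m. if m = 0 then complex_of_real (sqrt ((cmod (b 0))\<^sup>2 + (cmod (b j))\<^sup>2))
      else if m = j then 0 else b m)"
  shows "phases_generated d b"
proof -
  define r where "r = sqrt ((cmod (b 0))\<^sup>2 + (cmod (b j))\<^sup>2)"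
  define b' where "b' = (\<lambda>m. if m = 0 then complex_of_real r else if m = j then 0 else b m)"
  have b': "phases_generated d b'" "unit_vector d b'"
    using assms(5) unit_vector_merge_into_zero[OF assms(2-4)] unfolding b'_def r_def .
  define \<rho> where "\<rho> = sqrt ((cmod (b 0 - r))\<^sup>2 + (cmod (b j))\<^sup>2)"
  show ?thesis
  proof (cases "\<rho> = 0")
    case True
    then have "b = b'"
      by (auto simp: \<rho>_def b'_def fun_eq_iff)
    then show ?thesis
      using b'(1) by simp
  next
    case False
    define w where "w = pair_vec j ((b 0 - r) / \<rho>) (b j / \<rho>)"
    have "unit_vector d w"
      using False assms(2,3) by (simp add: w_def unit_vector_pair_vec_iff norm_divide power_divide
          flip: add_divide_distrib) (simp add: \<rho>_def)
    then have "phases_generated d w"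
      using phases_generated_pair_vec[OF assms(1-3)] by (simp add: w_def)
    have combination: "b = (\<lambda>m. 1 * b' m + complex_of_real \<rho> * w m)"
      using False assms(2) by (auto simp: b'_def w_def pair_vec_def fun_eq_iff)
    have "phases_generated d (\<lambda>m. 1 * b' m + complex_of_real \<rho> * w m)"
    proof (rule phases_generated_combination)
      show "unit_vector d (\<lambda>m. 1 * b' m + complex_of_real \<rho> * w m)"
        using assms(4) unfolding combination .
    qed (use b' \<open>phases_generated d w\<close> \<open>unit_vector d w\<close> in simp_all)
    then show ?thesis
      unfolding combination .
  qed
qed

lemma phases_generated_supported:
  assumes "3 \<le> d" "k < d" "unit_vector d b" "\<And>m. k < m \<Longrightarrow> b m = 0"
  shows "phases_generated d b"
  using assms(2-4)
proof (induction k arbitrary: b)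
  case 0
  have b: "b = pair_vec 1 (b 0) 0"
    using 0(3) by (auto simp: pair_vec_def fun_eq_iff)
  from 0(2) have "unit_vector d (pair_vec 1 (b 0) 0)"
    by (subst (asm) b)
  then have "phases_generated d (pair_vec 1 (b 0) 0)"
    using phases_generated_pair_vec[OF assms(1), of 1] assms(1) by simp
  then show ?case
    by (subst b)
next
  case (Suc k)
  have j: "0 < Suc k" "Suc k < d"
    using Suc.prems(1) by auto
  let ?b' = "\<lambda>m. if m = 0 then complex_of_real (sqrt ((cmod (b 0))\<^sup>2 + (cmod (b (Suc k)))\<^sup>2))
    else if m = Suc k then 0 else b m"
  have "k < d" "unit_vector d ?b'"
    using Suc.prems(1) unit_vector_merge_into_zero[OF j Suc.prems(2)] by simp_all
  moreover have "\<And>m. k < m \<Longrightarrow> ?b' m = 0"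
    using Suc.prems(3) by simp
  ultimately have "phases_generated d ?b'"
    by (rule Suc.IH)
  then show ?case
    by (rule phases_generated_if_merged_into_zero[OF assms(1) j Suc.prems(2)])
qed

theorem phases_generated_unit_vector:
  assumes "3 \<le> d" "unit_vector d v"
  shows "phases_generated d v"
proof -
  let ?v = "\<lambda>m. if m < d then v m else 0"
  have "unit_vector d ?v"
    using assms(2) by (simp add: unit_vector_def cinner_def)
  then have "phases_generated d ?v"
    using assms(1) by (intro phases_generated_supported[of d "d - 1"]) auto
  then show ?thesis
    by (simp add: phases_generated_cong[of d ?v v])
qed

section \<open>Factorisation of unitaries\<close>

definition orthonormal_columns :: "nat \<Rightarrow> complex mat \<Rightarrow> bool" where
  "orthonormal_columns d M \<longleftrightarrow>
     (\<forall>m<d. \<forall>n<d. cinner d (\<lambda>l. M $$ (l, m)) (\<lambda>l. M $$ (l, n)) = of_bool (m = n))"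

lemma orthonormal_columns_if_unitary:
  assumes "V \<in> carrier_mat d d" "V * mat_adjoint V = 1\<^sub>m d"
  shows "orthonormal_columns d V"
  unfolding orthonormal_columns_def
proof (intro allI impI)
  fix m n assume "m < d" "n < d"
  have "mat_adjoint V * V = 1\<^sub>m d"
    by (rule mat_mult_left_right_inverse[OF assms(1) mat_adjoint_carrier[OF assms(1)] assms(2)])
  then have "(mat_adjoint V * V) $$ (m, n) = of_bool (m = n)"
    using \<open>m < d\<close> \<open>n < d\<close> by simp
  moreover have "(mat_adjoint V * V) $$ (m, n) = (\<Sum>l<d. mat_adjoint V $$ (m, l) * V $$ (l, n))"
    by (rule index_mult_square[OF mat_adjoint_carrier[OF assms(1)] assms(1) \<open>m < d\<close> \<open>n < d\<close>])
  ultimately show "cinner d (\<lambda>l. V $$ (l, m)) (\<lambda>l. V $$ (l, n)) = of_bool (m = n)"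
    using assms(1) \<open>m < d\<close> by (simp add: cinner_def mat_adjoint_index)
qed

lemma index_phase_mat_mult:
  assumes "M \<in> carrier_mat d d" "l < d" "i < d"
  shows "(phase_mat d w a * M) $$ (l, i) = phase_vec d w a (\<lambda>m. M $$ (m, i)) l"
  using index_mult_square[OF phase_mat_carrier assms] apply_mat_phase_mat[OF assms(2)]
  by (simp add: apply_mat_def)

lemma orthonormal_columns_phase_mat_mult:
  assumes "M \<in> carrier_mat d d" "orthonormal_columns d M" "unit_vector d w" "cmod a = 1"
  shows "orthonormal_columns d (phase_mat d w a * M)"
  unfolding orthonormal_columns_def
proof (intro allI impI)
  fix m n assume "m < d" "n < d"
  have "cinner d (\<lambda>l. (phase_mat d w a * M) $$ (l, m)) (\<lambda>l. (phase_mat d w a * M) $$ (l, n))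
      = cinner d (phase_vec d w a (\<lambda>l. M $$ (l, m))) (phase_vec d w a (\<lambda>l. M $$ (l, n)))"
    using assms(1) \<open>m < d\<close> \<open>n < d\<close> by (intro cinner_cong) (simp_all add: index_phase_mat_mult)
  also have "\<dots> = of_bool (m = n)"
    using assms \<open>m < d\<close> \<open>n < d\<close> by (simp add: cinner_phase_vec orthonormal_columns_def)
  finally show "cinner d (\<lambda>l. (phase_mat d w a * M) $$ (l, m)) (\<lambda>l. (phase_mat d w a * M) $$ (l, n))
      = of_bool (m = n)" .
qed

lemma index_orthogonal_to_basis_column:
  assumes "orthonormal_columns d M" "k < d" "i < d" "i \<noteq> k"
    and "\<And>l. l < d \<Longrightarrow> M $$ (l, i) = basis_fun i l"
  shows "M $$ (i, k) = 0"
proof -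
  have "cinner d (\<lambda>l. M $$ (l, i)) (\<lambda>l. M $$ (l, k)) = 0"
    using assms(1-4) by (simp add: orthonormal_columns_def)
  then show ?thesis
    using assms(3,5) by (simp add: cinner_def basis_fun_def)
qed

lemma phase_mat_mult_cancel:
  assumes "M \<in> carrier_mat d d" "unit_vector d w" "cmod a = 1"
  shows "phase_mat d w a * (phase_mat d w (cnj a) * M) = M"
proof -
  have "phase_mat d w a * (phase_mat d w (cnj a) * M) = (phase_mat d w a * phase_mat d w (cnj a)) * M"
    using assms(1) by (simp add: assoc_mult_mat[of _ d d _ d _ d])
  also have "\<dots> = M"
    using assms by (simp add: phase_mat_mult unimodular_mult_cnj)
  finally show ?thesis .
qed

lemma exists_phase_vec_basis_fun_eq:
  assumes "k < d" "unit_vector d b" "\<And>i. k < i \<Longrightarrow> i < d \<Longrightarrow> b i = 0"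
  shows "\<exists>w a. unit_vector d w \<and> cmod a = 1 \<and> (\<forall>i. k < i \<longrightarrow> i < d \<longrightarrow> w i = 0)
    \<and> (\<forall>l<d. phase_vec d w a (basis_fun k) l = b l)"
proof (cases "\<forall>l<d. b l = basis_fun k l")
  case True
  then show ?thesis
    using assms(1) unit_vector_basis_fun[OF assms(1)]
    by (intro exI[of _ "basis_fun k"] exI[of _ 1]) (simp add: basis_fun_def)
next
  case False
  define v where "v = (\<lambda>l. b l - basis_fun k l)"
  define \<rho> where "\<rho> = sqrt (\<Sum>l<d. (cmod (v l))\<^sup>2)"
  obtain l0 where "l0 < d" "b l0 \<noteq> basis_fun k l0"
    using False by blast
  then have "0 < (\<Sum>l<d. (cmod (v l))\<^sup>2)"
    by (intro sum_pos2[of "{..<d}" l0]) (auto simp: v_def)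
  then have "0 < \<rho>" by (simp add: \<rho>_def)
  define w where "w = (\<lambda>l. inverse (complex_of_real \<rho>) * v l)"
  have "cinner d w w = cnj (inverse (complex_of_real \<rho>)) * inverse (complex_of_real \<rho>) * cinner d v v"
    unfolding w_def by (rule cinner_scale)
  also have "cinner d v v = complex_of_real (\<rho>\<^sup>2)"
    using \<open>0 < (\<Sum>l<d. (cmod (v l))\<^sup>2)\<close> by (simp add: cinner_def cnj_mult_self \<rho>_def)
  finally have "unit_vector d w"
    using \<open>0 < \<rho>\<close> by (simp add: unit_vector_def power2_eq_square field_simps)
  moreover have "b = (\<lambda>l. basis_fun k l + \<rho> * w l)"
    using \<open>0 < \<rho>\<close> by (simp add: w_def v_def fun_eq_iff field_simps)
  then obtain a where "cmod a = 1" "phase_vec d w a (basis_fun k) = b"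
    using exists_phase_vec_eq[OF calculation unit_vector_basis_fun[OF assms(1)]] assms(2) by metis
  moreover have "\<forall>i. k < i \<longrightarrow> i < d \<longrightarrow> w i = 0"
    using assms(3) by (simp add: w_def v_def basis_fun_def)
  ultimately show ?thesis by blast
qed

lemma index_phase_mat_mult_basis_column:
  assumes "M \<in> carrier_mat d d" "unit_vector d w" "cmod a = 1"
    and "\<And>i. k < i \<Longrightarrow> i < d \<Longrightarrow> w i = 0"
    and "\<And>l. l < d \<Longrightarrow> phase_vec d w a (basis_fun k) l = M $$ (l, k)"
    and "\<And>i l. k < i \<Longrightarrow> i < d \<Longrightarrow> l < d \<Longrightarrow> M $$ (l, i) = basis_fun i l"
    and "k \<le> i" "i < d" "l < d"
  shows "(phase_mat d w (cnj a) * M) $$ (l, i) = basis_fun i l"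
proof (cases "i = k")
  case True
  have "(phase_mat d w (cnj a) * M) $$ (l, i) = phase_vec d w (cnj a) (\<lambda>m. M $$ (m, k)) l"
    using True assms(1,8,9) by (simp add: index_phase_mat_mult)
  also have "\<dots> = phase_vec d w (cnj a) (phase_vec d w a (basis_fun k)) l"
    using assms(5,9) by (intro phase_vec_cong) simp_all
  also have "\<dots> = basis_fun i l"
    using True assms(2,3) by (simp add: phase_vec_phase_vec unimodular_mult_cnj mult.commute)
  finally show ?thesis .
next
  case False
  have "(phase_mat d w (cnj a) * M) $$ (l, i) = phase_vec d w (cnj a) (\<lambda>m. M $$ (m, i)) l"
    using assms(1,8,9) by (simp add: index_phase_mat_mult)
  also have "\<dots> = phase_vec d w (cnj a) (basis_fun i) l"
    using False assms(6-9) by (intro phase_vec_cong) simp_all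
  moreover have "cinner d w (basis_fun i) = 0"
    using False assms(4,7,8) by (simp add: cinner_def basis_fun_def)
  ultimately show ?thesis
    by (simp add: phase_vec_def)
qed

(* peel off the columns from the right: a phase matrix maps e_k to column k and fixes e_(k+1), ... *)
lemma gate_product_if_orthonormal_columns:
  assumes "3 \<le> d" "k \<le> d" "M \<in> carrier_mat d d" "orthonormal_columns d M"
    and "\<And>i l. k \<le> i \<Longrightarrow> i < d \<Longrightarrow> l < d \<Longrightarrow> M $$ (l, i) = basis_fun i l"
  shows "gate_product d M"
  using assms(2-5)
proof (induction k arbitrary: M)
  case 0
  then have "M = 1\<^sub>m d"
    by (intro eq_matI) (auto simp: basis_fun_def)
  then show ?case
    by (simp add: gate_product_one)
next
  case (Suc k)
  have "k < d" using Suc.prems(1) by simp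
  have "unit_vector d (\<lambda>l. M $$ (l, k))"
    using Suc.prems(3) \<open>k < d\<close> by (simp add: orthonormal_columns_def unit_vector_def)
  moreover have "M $$ (i, k) = 0" if "k < i" "i < d" for i
    using Suc.prems(3,4) \<open>k < d\<close> that by (intro index_orthogonal_to_basis_column) auto
  ultimately obtain w a where w: "unit_vector d w" "cmod a = 1" "\<And>i. k < i \<Longrightarrow> i < d \<Longrightarrow> w i = 0"
    and column: "\<And>l. l < d \<Longrightarrow> phase_vec d w a (basis_fun k) l = M $$ (l, k)"
    using exists_phase_vec_basis_fun_eq[OF \<open>k < d\<close>] by blast
  define M' where "M' = phase_mat d w (cnj a) * M"
  have "M' \<in> carrier_mat d d"
    using Suc.prems(2) by (simp add: M'_def mult_carrier_mat[OF phase_mat_carrier])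
  moreover have "orthonormal_columns d M'"
    using Suc.prems(2,3) w(1,2) by (simp add: M'_def orthonormal_columns_phase_mat_mult)
  moreover have "M' $$ (l, i) = basis_fun i l" if "k \<le> i" "i < d" "l < d" for i l
    unfolding M'_def using Suc.prems(2,4) w column that
    by (intro index_phase_mat_mult_basis_column) auto
  ultimately have "gate_product d M'"
    using Suc.IH \<open>k < d\<close> by simp
  moreover have "gate_product d (phase_mat d w a)"
    using phases_generated_unit_vector[OF assms(1) w(1)] w(2) by (simp add: phases_generated_def)
  ultimately show ?case
    using phase_mat_mult_cancel[OF Suc.prems(2) w(1,2)] gate_product_mult by (metis M'_def)
qed

(* primality is used only through d \<ge> 3 *)
theorem theorem3:
  fixes d :: nat and V :: "complex mat"
  assumes "prime d" and "odd d" and "unitary_mat d V"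
  shows "\<exists>cs :: (nat \<Rightarrow> complex) list.
           (\<forall>c \<in> set cs. admissible d c) \<and>
           V = foldr (\<lambda>c M. gateU d c * M) cs (1\<^sub>m d)"
proof -
  have "3 \<le> d"
    using prime_ge_2_nat[OF assms(1)] assms(2) by (cases "d = 2") auto
  have "V \<in> carrier_mat d d" "V * mat_adjoint V = 1\<^sub>m d"
    using assms(3) by (simp_all add: unitary_mat_def)
  then have "gate_product d V"
    using \<open>3 \<le> d\<close>
    by (intro gate_product_if_orthonormal_columns[of d d]) (simp_all add: orthonormal_columns_if_unitary)
  then show ?thesis
    unfolding gate_product_def by blast
qed

end
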